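(* Let $Y=(Y_{ij})$ be a $3\times 3$ real symmetric positive definite Minkowski-reduced matrix. Put $$c_1=\min\bigl(Y_{11}-Y_{12}-|Y_{13}|,\ Y_{22}-Y_{21}-Y_{23},\ Y_{33}-Y_{32}-|Y_{31}|\bigr),\qquad c=\max\Bigl(c_1,\ \tfrac{1}{100}Y_{11}\Bigr).$$ Then for all $n\in\mathbb{R}^3$ we have ${}^t n\, Y\, n\ \ge\ c\,{}^t n\, n$.
   Context: A real symmetric positive definite $g\times g$ matrix $Y$ is Minkowski-reduced if (a) for all $j=1,\dots,g$ and all $v=(v_1,\dots,v_g)\in\mathbb{Z}^g$ with $\gcd(v_j,\dots,v_g)=1$ one has ${}^t v Y v\ge Y_{jj}$, and (b) for all $j=1,\dots,g-1$ one has $Y_{j,j+1}\ge 0$. *)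

theory Defs
  imports "HOL-Analysis.Analysis"
begin

text \<open>g x g real matrices are represented as functions nat => nat => real,
  with entries indexed by 1..g; vectors as functions nat => real indexed by 1..g.\<close>

definition qform :: "nat \<Rightarrow> (nat \<Rightarrow> nat \<Rightarrow> real) \<Rightarrow> (nat \<Rightarrow> real) \<Rightarrow> real" where
  "qform g Y v = (\<Sum>i=1..g. \<Sum>j=1..g. v i * Y i j * v j)"

definition sym_posdef :: "nat \<Rightarrow> (nat \<Rightarrow> nat \<Rightarrow> real) \<Rightarrow> bool" where
  "sym_posdef g Y \<longleftrightarrow>
     (\<forall>i\<in>{1..g}. \<forall>j\<in>{1..g}. Y i j = Y j i) \<and>
     (\<forall>v::nat \<Rightarrow> real. (\<exists>i\<in>{1..g}. v i \<noteq> 0) \<longrightarrow> qform g Y v > 0)"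

definition minkowski_reduced :: "nat \<Rightarrow> (nat \<Rightarrow> nat \<Rightarrow> real) \<Rightarrow> bool" where
  "minkowski_reduced g Y \<longleftrightarrow>
     (\<forall>j\<in>{1..g}. \<forall>v::nat \<Rightarrow> int. Gcd (v ` {j..g}) = 1 \<longrightarrow>
         qform g Y (\<lambda>i. of_int (v i)) \<ge> Y j j) \<and>
     (\<forall>j\<in>{1..<g}. Y j (j+1) \<ge> 0)"

end

theory Submission
  imports Defs
begin

text \<open>The bound by \<open>c\<^sub>1\<close> is diagonal dominance: each cross term \<open>2 Y\<^sub>i\<^sub>j n\<^sub>i n\<^sub>j\<close> is at least
  \<open>-|Y\<^sub>i\<^sub>j| (n\<^sub>i\<^sup>2 + n\<^sub>j\<^sup>2)\<close>. The bound by \<open>Y\<^sub>1\<^sub>1/100\<close> uses only finitely many reduction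
  conditions, namely those for the vectors \<open>(\<plusminus>1,0,1), (1,-1,1), (0,-1,1), (-1,1,0), (0,1,0), (0,0,1)\<close>
  together with \<open>Y\<^sub>1\<^sub>2, Y\<^sub>2\<^sub>3 \<ge> 0\<close>: under these linear conditions on the entries, \<open>Y - Y\<^sub>1\<^sub>1/100\<close>
  is an explicit nonnegative combination of squares of integral linear forms.\<close>

definition ternary_form ::
    "real \<Rightarrow> real \<Rightarrow> real \<Rightarrow> real \<Rightarrow> real \<Rightarrow> real \<Rightarrow> real \<Rightarrow> real \<Rightarrow> real \<Rightarrow> real" where
  "ternary_form a b c p q r x y z =
     a*x*x + b*y*y + c*z*z + 2*p*x*y + 2*q*x*z + 2*r*y*z"

lemma qform_3_eq_ternary_form:
  assumes "sym_posdef 3 Y"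
  shows "qform 3 Y n = ternary_form (Y 1 1) (Y 2 2) (Y 3 3) (Y 1 2) (Y 1 3) (Y 2 3) (n 1) (n 2) (n 3)"
proof -
  have "Y 2 1 = Y 1 2" "Y 3 1 = Y 1 3" "Y 3 2 = Y 2 3"
    using assms unfolding sym_posdef_def by auto
  moreover have "{1..3::nat} = {1,2,3}" by auto
  ultimately show ?thesis
    unfolding qform_def ternary_form_def by (simp add: algebra_simps)
qed

lemma Gcd_int_eq_1_if_unit_mem:
  assumes "u \<in> A" "is_unit (u::int)"
  shows "Gcd A = 1"
  by (metis Gcd_dvd assms dvd_unit_imp_unit is_unit_normalize normalize_Gcd)

lemma minkowski_reduced_qform_ge_diag:
  assumes "minkowski_reduced g Y" "1 \<le> j" "j \<le> k" "k \<le> g" "is_unit (v k)"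
  shows "qform g Y (\<lambda>i. of_int (v i)) \<ge> Y j j"
proof -
  have "Gcd (v ` {j..g}) = 1"
    using assms(3-5) by (intro Gcd_int_eq_1_if_unit_mem) auto
  then show ?thesis
    using assms(1,2,3,4) unfolding minkowski_reduced_def by auto
qed

lemma minkowski_reduced_superdiag_nonneg:
  assumes "minkowski_reduced g Y" "1 \<le> j" "j < g"
  shows "Y j (j+1) \<ge> 0"
  using assms unfolding minkowski_reduced_def by auto

lemma minkowski_reduced_3_linear_conditions:
  assumes "sym_posdef 3 Y" "minkowski_reduced 3 Y"
  shows "Y 1 2 \<ge> 0" "Y 2 3 \<ge> 0" "Y 1 1 \<le> Y 2 2" "Y 2 2 \<le> Y 3 3"
    "Y 1 1 + 2 * Y 1 3 \<ge> 0" "Y 1 1 - 2 * Y 1 3 \<ge> 0"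
    "Y 1 1 + Y 2 2 - 2 * Y 1 2 + 2 * Y 1 3 - 2 * Y 2 3 \<ge> 0"
    "Y 2 2 - 2 * Y 2 3 \<ge> 0" "Y 1 1 - 2 * Y 1 2 \<ge> 0"
proof -
  let ?vec = "\<lambda>x y z (i::nat). if i = 1 then x else if i = 2 then y else (z::int)"
  have reduced: "ternary_form (Y 1 1) (Y 2 2) (Y 3 3) (Y 1 2) (Y 1 3) (Y 2 3) x y z \<ge> Y j j"
    if "1 \<le> j" "j \<le> k" "k \<le> 3" "is_unit (?vec x y z k)" for x y z j k
    using minkowski_reduced_qform_ge_diag[OF assms(2), of j k "?vec x y z"] that
    by (simp add: qform_3_eq_ternary_form[OF assms(1)])
  show "Y 1 2 \<ge> 0" "Y 2 3 \<ge> 0"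
    using minkowski_reduced_superdiag_nonneg[OF assms(2), of 1]
      minkowski_reduced_superdiag_nonneg[OF assms(2), of 2]
    by (simp_all add: numeral_2_eq_2 numeral_3_eq_3)
  show "Y 1 1 \<le> Y 2 2" "Y 2 2 \<le> Y 3 3" "Y 1 1 + 2 * Y 1 3 \<ge> 0" "Y 1 1 - 2 * Y 1 3 \<ge> 0"
      "Y 1 1 + Y 2 2 - 2 * Y 1 2 + 2 * Y 1 3 - 2 * Y 2 3 \<ge> 0" "Y 2 2 - 2 * Y 2 3 \<ge> 0"
      "Y 1 1 - 2 * Y 1 2 \<ge> 0"
    using reduced[of 1 2 0 1 0] reduced[of 2 3 0 0 1] reduced[of 3 3 1 0 1]
      reduced[of 3 3 "-1" 0 1] reduced[of 3 3 1 "-1" 1] reduced[of 3 3 0 "-1" 1]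
      reduced[of 2 2 "-1" 1 0]
    by (simp_all add: ternary_form_def)
qed

lemma ternary_form_ge_diagonal_dominance:
  fixes a b c p q r x y z :: real
  assumes "p \<ge> 0" "r \<ge> 0"
  shows "ternary_form a b c p q r x y z \<ge>
    min (a - p - \<bar>q\<bar>) (min (b - p - r) (c - r - \<bar>q\<bar>)) * (x*x + y*y + z*z)"
proof -
  define m where "m = min (a - p - \<bar>q\<bar>) (min (b - p - r) (c - r - \<bar>q\<bar>))"
  have xy: "2*p*x*y \<ge> - p*(x*x + y*y)"
    using mult_nonneg_nonneg[OF assms(1) zero_le_square[of "x+y"]] by (simp add: algebra_simps)
  have yz: "2*r*y*z \<ge> - r*(y*y + z*z)"
    using mult_nonneg_nonneg[OF assms(2) zero_le_square[of "y+z"]] by (simp add: algebra_simps)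
  have xz: "2*q*x*z \<ge> - \<bar>q\<bar>*(x*x + z*z)"
  proof (cases "q \<ge> 0")
    case True
    then show ?thesis
      using mult_nonneg_nonneg[OF True zero_le_square[of "x+z"]] by (simp add: algebra_simps)
  next
    case False
    then have "q*((x-z)*(x-z)) \<le> 0"
      by (intro mult_nonpos_nonneg) auto
    with False show ?thesis by (simp add: algebra_simps)
  qed
  have "ternary_form a b c p q r x y z \<ge>
      (a - p - \<bar>q\<bar>) * (x*x) + (b - p - r) * (y*y) + (c - r - \<bar>q\<bar>) * (z*z)"
    using xy yz xz unfolding ternary_form_def by (simp add: algebra_simps)
  moreover have "(a - p - \<bar>q\<bar>) * (x*x) \<ge> m * (x*x)" "(b - p - r) * (y*y) \<ge> m * (y*y)"
      "(c - r - \<bar>q\<bar>) * (z*z) \<ge> m * (z*z)"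
    by (auto intro: mult_right_mono simp: m_def)
  ultimately show ?thesis
    unfolding m_def[symmetric] by (simp add: algebra_simps)
qed

lemma ternary_form_ge_first_diag_div_100:
  fixes a b c p q r x y z :: real
  assumes "a \<le> b" "b \<le> c" "p \<ge> 0" "r \<ge> 0"
    and "a + 2*q \<ge> 0" "a - 2*q \<ge> 0" "a + b - 2*p + 2*q - 2*r \<ge> 0"
    and "b - 2*r \<ge> 0" "a - 2*p \<ge> 0"
  shows "ternary_form a b c p q r x y z \<ge> a/100 * (x*x + y*y + z*z)"
proof -
  define w1 where "w1 = 1/40*a + 22/25*p - 1/20*q"
  define w2 where "w2 = -23/50*a + 49/100*b + 19/50*p - 3/50*q + 13/25*r"
  define w3 where "w3 = 1/50*a - 49/50*b + c - 1/25*p + 1/25*q - 1/25*r"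
  define w4 where "w4 = 9/40*a + 9/20*q"
  define w5 where "w5 = 21/50*a + 1/50*b - 21/25*p + 1/25*q - 1/25*r"
  define w6 where "w6 = 6/25*a - 23/50*p + 1/50*q"
  define w7 where "w7 = 23/200*a - 17/100*p + 3/50*q"
  define w8 where "w8 = 9/200*a - 2/25*p + 1/100*q"
  define w9 where "w9 = 1/50*p"
  define w10 where "w10 = -1/4*a + 49/100*b - 12/25*r"
  define w11 where "w11 = 19/200*a - 19/100*p"
  define w12 where "w12 = 49/200*a - 49/100*q"
  note ws = w1_def w2_def w3_def w4_def w5_def w6_def w7_def w8_def w9_def w10_def w11_def w12_def
  have weights_nonneg: "w1 \<ge> 0" "w2 \<ge> 0" "w3 \<ge> 0" "w4 \<ge> 0" "w5 \<ge> 0" "w6 \<ge> 0"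
     "w7 \<ge> 0" "w8 \<ge> 0" "w9 \<ge> 0" "w10 \<ge> 0" "w11 \<ge> 0" "w12 \<ge> 0"
    using assms unfolding ws by linarith+
  have "ternary_form a b c p q r x y z - a/100 * (x*x + y*y + z*z) =
     w1*((x+y)*(x+y)) + w2*((y+z)*(y+z)) + w3*(z*z) + w4*((x+z)*(x+z)) + w5*(y*y) + w6*(x*x)
     + w7*((x+y+z)*(x+y+z)) + w8*((x-y)*(x-y)) + w9*((x+y-z)*(x+y-z)) + w10*((y-z)*(y-z))
     + w11*((x-y-z)*(x-y-z)) + w12*((x-z)*(x-z))"
    unfolding ternary_form_def ws by algebra
  also have "\<dots> \<ge> 0"
    by (intro add_nonneg_nonneg mult_nonneg_nonneg weights_nonneg zero_le_square)
  finally show ?thesis by simp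
qed

lemma max_mult_le:
  fixes s t u1 u2 :: real
  assumes "s \<ge> 0" "u1 * s \<le> t" "u2 * s \<le> t"
  shows "max u1 u2 * s \<le> t"
  using assms by (simp add: max_def)

theorem lemma2p3:
  fixes Y :: "nat \<Rightarrow> nat \<Rightarrow> real"
  assumes "sym_posdef 3 Y"
    and "minkowski_reduced 3 Y"
  shows "\<forall>n::nat \<Rightarrow> real.
     qform 3 Y n \<ge>
       max (min (Y 1 1 - Y 1 2 - \<bar>Y 1 3\<bar>)
                (min (Y 2 2 - Y 2 1 - Y 2 3) (Y 3 3 - Y 3 2 - \<bar>Y 3 1\<bar>)))
           (Y 1 1 / 100)
       * (\<Sum>i=1..3. n i * n i)"
proof
  fix n :: "nat \<Rightarrow> real"
  note reduction_conditions = minkowski_reduced_3_linear_conditions[OF assms]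
  have "{1..3::nat} = {1,2,3}" by auto
  then have sum_squares: "(\<Sum>i=1..3. n i * n i) = n 1 * n 1 + n 2 * n 2 + n 3 * n 3"
    by simp
  have "qform 3 Y n \<ge> min (Y 1 1 - Y 1 2 - \<bar>Y 1 3\<bar>)
      (min (Y 2 2 - Y 1 2 - Y 2 3) (Y 3 3 - Y 2 3 - \<bar>Y 1 3\<bar>)) * (\<Sum>i=1..3. n i * n i)"
    unfolding qform_3_eq_ternary_form[OF assms(1)] sum_squares
    using reduction_conditions by (intro ternary_form_ge_diagonal_dominance)
  moreover have "qform 3 Y n \<ge> Y 1 1 / 100 * (\<Sum>i=1..3. n i * n i)"
    unfolding qform_3_eq_ternary_form[OF assms(1)] sum_squares
    using reduction_conditions by (intro ternary_form_ge_first_diag_div_100)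
  moreover have "Y 2 1 = Y 1 2" "Y 3 1 = Y 1 3" "Y 3 2 = Y 2 3"
    using assms(1) unfolding sym_posdef_def by auto
  ultimately show "qform 3 Y n \<ge> max (min (Y 1 1 - Y 1 2 - \<bar>Y 1 3\<bar>)
                (min (Y 2 2 - Y 2 1 - Y 2 3) (Y 3 3 - Y 3 2 - \<bar>Y 3 1\<bar>)))
           (Y 1 1 / 100) * (\<Sum>i=1..3. n i * n i)"
    by (simp add: max_mult_le sum_nonneg)
qed

end
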